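(* Let $\alpha\ge1$, integers $k_1,k_2\ge0$, $n\ge1$, $k=k_1+k_2$. For every integer $i$ with $1\le i\le n$, $$\frac{k!}{k_1!\,k_2!}\,(k_1+n+1-i)^{\alpha(k_1+n+1-i)}\,(k_2+i)^{\alpha(k_2+i)}\ \le\ 4^{-(\alpha-1)\min(k_1+1,\,k_2+1)}\,(k+n+1)^{\alpha(k+n+1)}.$$
   Context: Convention $0^0=1$. *)

theory Defs
  imports Complex_Main
begin

end

theory Submission imports Defs begin

(* Put a = k1 + n + 1 - i and b = k2 + i, so that a \<ge> k1 + 1, b \<ge> k2 + 1
   and a + b = k + n + 1; write C = (k choose k1) for the multinomial factor.
   Two bounds of the same shape hold for X = C a^a b^b and Y = 4^m a^a b^b,
   where m = min (k1 + 1) (k2 + 1) \<le> min a b: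
     (1) X \<le> (a+b)^(a+b): since C \<le> (a+b choose a), this is one term of the
         binomial expansion of (a+b)^(a+b);
     (2) Y \<le> (a+b)^(a+b): the entropy inequality s^s t^t 4^s \<le> (s+t)^(s+t) for
         0 < s \<le> t, proved by monotonicity of x \<mapsto> (s+x) ln (s+x) - x ln x.
   Interpolating, X * Y^(\<alpha>-1) \<le> ((a+b)^(a+b))^\<alpha> for \<alpha> \<ge> 1, and unfolding
   X * Y^(\<alpha>-1) = 4^((\<alpha>-1) m) * C * a^(\<alpha> a) * b^(\<alpha> b) gives the claim. *)

lemma entropy_ineq:
  fixes s t :: real
  assumes "0 < s" "s \<le> t"
  shows "s * ln s + t * ln t + s * ln 4 \<le> (s + t) * ln (s + t)"
proof -
  define h where "h x = (s + x) * ln (s + x) - x * ln x" for x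
  have "h s \<le> h t"
  proof (rule DERIV_nonneg_imp_nondecreasing[OF assms(2)])
    fix x assume x: "s \<le> x" "x \<le> t"
    hence xp: "x > 0" using assms by simp
    have "DERIV h x :> ln (s + x) - ln x"
    proof -
      have sx: "s + x > 0" "s + x \<noteq> 0" "x \<noteq> 0" using xp assms by auto
      show ?thesis unfolding h_def
        by (rule derivative_eq_intros refl | use sx xp in \<open>simp add: field_simps\<close>)+
    qed
    moreover have "ln x \<le> ln (s + x)" using xp assms by simp
    ultimately show "\<exists>y. DERIV h x :> y \<and> y \<ge> 0" by auto
  qed
  moreover have "ln (s + s) = ln 2 + ln s" using assms by (simp add: ln_mult)
  moreover have "ln (4::real) = 2 * ln 2"
    using ln_realpow[of 2 2] by simp
  ultimately show ?thesis unfolding h_def by (simp add: algebra_simps)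
qed

lemma entropy_powr_bound:
  fixes s t m :: real
  assumes "0 < s" "0 < t" "m \<le> min s t"
  shows "4 powr m * s powr s * t powr t \<le> (s + t) powr (s + t)"
proof -
  have "s * ln s + t * ln t + min s t * ln 4 \<le> (s + t) * ln (s + t)"
  proof (cases "s \<le> t")
    case True
    then show ?thesis using entropy_ineq[of s t] assms by simp
  next
    case False
    then show ?thesis using entropy_ineq[of t s] assms by (simp add: algebra_simps)
  qed
  then have "exp (min s t * ln 4 + s * ln s + t * ln t) \<le> exp ((s + t) * ln (s + t))"
    by simp
  then have bound: "4 powr min s t * s powr s * t powr t \<le> (s + t) powr (s + t)"
    using assms by (simp add: powr_def exp_add mult.commute)
  have "4 powr m * s powr s * t powr t \<le> 4 powr min s t * s powr s * t powr t"
    using assms(3) by (intro mult_right_mono) auto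
  also note bound
  finally show ?thesis .
qed

text \<open>One term of the binomial expansion of \<open>(a + b) ^ (a + b)\<close> (bound (1) of the outline).\<close>

lemma binomial_times_powers_le:
  fixes a b :: nat
  shows "((a + b) choose a) * a ^ a * b ^ b \<le> (a + b) ^ (a + b)"
proof -
  have "((a + b) choose a) * a ^ a * b ^ (a + b - a)
      \<le> (\<Sum>j\<le>a+b. ((a+b) choose j) * a ^ j * b ^ (a + b - j))"
    by (rule member_le_sum[where f = "\<lambda>j. ((a+b) choose j) * a ^ j * b ^ (a + b - j)"]) auto
  also have "\<dots> = (a + b) ^ (a + b)"
    using binomial_ring[of a b "a+b"] by simp
  finally show ?thesis by simp
qed

lemma binomial_mono_both:
  fixes p q p' q' :: nat
  assumes "p \<le> p'" "q \<le> q'"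
  shows "(p + q) choose p \<le> (p' + q') choose p'"
proof -
  have "(p + q) choose p \<le> (p + q') choose p" using assms by (intro binomial_right_mono) simp
  also have "\<dots> = (p + q') choose q'" by (metis binomial_symmetric le_add2 add_diff_cancel_right')
  also have "\<dots> \<le> (p' + q') choose q'" using assms by (intro binomial_right_mono) simp
  also have "\<dots> = (p' + q') choose p'" by (metis binomial_symmetric le_add2 add_diff_cancel_right')
  finally show ?thesis .
qed

lemma binomial_powr_bound:
  fixes p q a b :: nat
  assumes "p \<le> a" "q \<le> b" "0 < a" "0 < b"
  shows "real ((p + q) choose p) * real a powr a * real b powr b
         \<le> real (a + b) powr real (a + b)"
proof -
  have "((p + q) choose p) * a ^ a * b ^ b \<le> ((a + b) choose a) * a ^ a * b ^ b"
    using binomial_mono_both[OF assms(1,2)] by simp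
  also have "\<dots> \<le> (a + b) ^ (a + b)"
    by (rule binomial_times_powers_le)
  finally have "real ((p + q) choose p) * real a ^ a * real b ^ b \<le> real (a + b) ^ (a + b)"
    by (metis of_nat_le_iff of_nat_mult of_nat_power)
  moreover have "real (a + b) powr real (a + b) = real (a + b) ^ (a + b)"
    using assms by (intro powr_realpow) simp
  ultimately show ?thesis using assms by (simp add: powr_realpow)
qed

text \<open>Interpolation between two bounds by the same quantity: the exponent \<open>\<alpha> \<ge> 1\<close> is
  split as \<open>1 + (\<alpha> - 1)\<close>, the first part using \<open>X \<le> Z\<close>, the rest \<open>Y \<le> Z\<close>.\<close>

lemma interpolate_bounds:
  fixes X Y Z \<alpha> :: real
  assumes "0 \<le> X" "X \<le> Z" "0 < Y" "Y \<le> Z" "\<alpha> \<ge> 1"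
  shows "X * Y powr (\<alpha> - 1) \<le> Z powr \<alpha>"
proof -
  have "X * Y powr (\<alpha> - 1) \<le> Z * Z powr (\<alpha> - 1)"
    using assms by (intro mult_mono powr_mono2) auto
  also have "\<dots> = Z powr \<alpha>"
    using assms by (simp add: powr_diff)
  finally show ?thesis .
qed

text \<open>The interpolation applied to \<open>X = C s^s t^t\<close> and \<open>Y = 4^m s^s t^t\<close>, both bounded
  by \<open>(s + t)^(s + t)\<close>: then \<open>X Y^(\<alpha>-1) = 4^((\<alpha>-1) m) C s^(\<alpha> s) t^(\<alpha> t)\<close> gives the
  shape of the corollary.\<close>

lemma interpolated_power_bound:
  fixes C s t m \<alpha> :: real
  assumes pos: "0 \<le> C" "0 < s" "0 < t" and "\<alpha> \<ge> 1"
    and X_le: "C * s powr s * t powr t \<le> (s + t) powr (s + t)"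
    and Y_le: "4 powr m * s powr s * t powr t \<le> (s + t) powr (s + t)"
  shows "C * s powr (\<alpha> * s) * t powr (\<alpha> * t)
         \<le> 4 powr (- (\<alpha> - 1) * m) * (s + t) powr (\<alpha> * (s + t))"
proof -
  define L where "L = C * s powr (\<alpha> * s) * t powr (\<alpha> * t)"
  have split_s: "s powr s * s powr (\<alpha> * s - s) = s powr (\<alpha> * s)"
    and split_t: "t powr t * t powr (\<alpha> * t - t) = t powr (\<alpha> * t)"
    by (simp_all flip: powr_add)
  have "4 powr ((\<alpha> - 1) * m) * L
      = (C * s powr s * t powr t) * (4 powr m * s powr s * t powr t) powr (\<alpha> - 1)"
    using pos unfolding L_def
    by (simp add: powr_mult powr_powr algebra_simps flip: split_s split_t)
  also have "\<dots> \<le> ((s + t) powr (s + t)) powr \<alpha>"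
    by (rule interpolate_bounds[OF _ X_le _ Y_le \<open>\<alpha> \<ge> 1\<close>]) (use pos in simp_all)
  also have "\<dots> = (s + t) powr (\<alpha> * (s + t))"
    by (simp add: powr_powr mult.commute)
  finally have scaled: "4 powr ((\<alpha> - 1) * m) * L \<le> (s + t) powr (\<alpha> * (s + t))" .
  have "L = 4 powr (- (\<alpha> - 1) * m) * (4 powr ((\<alpha> - 1) * m) * L)"
    by (simp add: algebra_simps flip: powr_add)
  also have "\<dots> \<le> 4 powr (- (\<alpha> - 1) * m) * (s + t) powr (\<alpha> * (s + t))"
    using scaled by (intro mult_left_mono) auto
  finally show ?thesis unfolding L_def .
qed

theorem corollaryA2:
  fixes \<alpha> :: real and k1 k2 n i :: nat
  assumes "\<alpha> \<ge> 1" and "n \<ge> 1" and "1 \<le> i" and "i \<le> n"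
  shows "real (fact (k1 + k2)) / (real (fact k1) * real (fact k2))
           * real (k1 + n + 1 - i) powr (\<alpha> * real (k1 + n + 1 - i))
           * real (k2 + i) powr (\<alpha> * real (k2 + i))
         \<le> 4 powr (- (\<alpha> - 1) * real (min (k1 + 1) (k2 + 1)))
           * real (k1 + k2 + n + 1) powr (\<alpha> * real (k1 + k2 + n + 1))"
proof -
  define a where "a = k1 + n + 1 - i"
  define b where "b = k2 + i"
  define m where "m = min (k1 + 1) (k2 + 1)"
  have ha: "k1 + 1 \<le> a" and hb: "k2 + 1 \<le> b" and hN: "k1 + k2 + n + 1 = a + b"
    using assms unfolding a_def b_def by auto
  have pos: "0 < a" "0 < b" using ha hb by auto
  have multinomial: "real (fact (k1 + k2)) / (real (fact k1) * real (fact k2))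
      = real ((k1 + k2) choose k1)"
    using binomial_fact[of k1 "k1 + k2", where 'a = real] by simp
  have "real ((k1 + k2) choose k1) * real a powr (\<alpha> * a) * real b powr (\<alpha> * b)
      \<le> 4 powr (- (\<alpha> - 1) * m) * (real a + real b) powr (\<alpha> * (real a + real b))"
  proof (rule interpolated_power_bound)
    show "real ((k1 + k2) choose k1) * real a powr a * real b powr b
        \<le> (real a + real b) powr (real a + real b)"
      using binomial_powr_bound[of k1 a k2 b] ha hb pos by simp
    show "4 powr m * real a powr a * real b powr b \<le> (real a + real b) powr (real a + real b)"
      using ha hb pos unfolding m_def by (intro entropy_powr_bound) auto
  qed (use pos assms(1) in auto)
  then show ?thesis
    unfolding multinomial a_def[symmetric] b_def[symmetric] m_def[symmetric] hN by simp
qed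

end
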